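(* For all non-negative integers $m$ and $n$, \[ \overline{ {m+n \brack n} }_{q,t} = \sum_{k=0}^{\min\{m ,n \}} t^k q^{k(k+1)/2} (-1/t;q)_{k} {m \brack k}_{q} {n \brack k}_{q}. \]
   Context: An overpartition is a partition in which the last occurrence of each distinct part size may be overlined; its weight $|\lambda|$ is the sum of its parts. $\overline{{m+n \brack n}}_{q,t}=\sum_{\lambda} t^{\#_o(\lambda)} q^{|\lambda|}$, the sum over all overpartitions $\lambda$ with largest part at most $m$ and at most $n$ parts, $\#_o(\lambda)$ being the number of overlined parts. ${a \brack b}_q=\frac{(q;q)_{a}}{(q;q)_b(q;q)_{a-b}}$ is the Gaussian polynomial and $(x;q)_k=\prod_{j=1}^k(1-xq^{j-1})$; the product $t^k(-1/t;q)_k=\prod_{j=1}^k(t+q^{j-1})$ is a polynomial in $t$. *)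

theory Defs
  imports Main "HOL-Library.Multiset"
begin

text \<open>An overpartition with largest part at most m and at most n parts is encoded as a
  pair (P, Ov): P is the multiset of (positive) parts, O is the set of distinct part sizes
  whose last occurrence is overlined (so O is a subset of the set of part sizes).\<close>
definition overpartitions :: "nat \<Rightarrow> nat \<Rightarrow> (nat multiset \<times> nat set) set" where
  "overpartitions m n = {(P, Ov). (\<forall>x\<in>#P. 0 < x \<and> x \<le> m) \<and> size P \<le> n \<and> Ov \<subseteq> set_mset P}"

definition overline_gauss :: "nat \<Rightarrow> nat \<Rightarrow> 'a::comm_ring_1 \<Rightarrow> 'a \<Rightarrow> 'a" where
  "overline_gauss m n q t = (\<Sum>(P, Ov)\<in>overpartitions m n. t ^ card Ov * q ^ sum_mset P)"

definition qpoch :: "'a::comm_ring_1 \<Rightarrow> 'a \<Rightarrow> nat \<Rightarrow> 'a" where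
  "qpoch x q k = (\<Prod>j<k. 1 - x * q ^ j)"

definition gauss_binom :: "nat \<Rightarrow> nat \<Rightarrow> 'a::field \<Rightarrow> 'a" where
  "gauss_binom a b q = qpoch q q a / (qpoch q q b * qpoch q q (a - b))"

end

theory Submission imports Defs begin

text \<open>Both sides F(m, n) satisfy F(0, n) = F(m, 0) = 1 and
  F(m+1, n+1) = q^(m+1) F(m+1, n) + F(m, n+1) + t q^(m+1) F(m, n).
  For overpartitions, classify by the part m+1: it is absent, or removing one copy of it leaves an
  overpartition with parts at most m+1, or it occurs exactly once and is overlined.
  For the sum, the two q-Pascal rules turn the difference of the two sides into a telescoping sum.\<close>

lemma overpartitions_0_left: "overpartitions 0 n = {({#}, {})}"
  by (auto simp: overpartitions_def) (metis less_irrefl multiset_nonemptyE)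

lemma overpartitions_0_right: "overpartitions m 0 = {({#}, {})}"
  by (auto simp: overpartitions_def)

lemma largest_part_notin_overpartitions:
  "(P, Ov) \<in> overpartitions m n \<Longrightarrow> Suc m \<notin># P \<and> Suc m \<notin> Ov"
  by (fastforce simp: overpartitions_def)

lemma overpartitions_Suc_Suc:
  "overpartitions (Suc m) (Suc n) = overpartitions m (Suc n)
     \<union> (\<lambda>(P, Ov). (add_mset (Suc m) P, Ov)) ` overpartitions (Suc m) n
     \<union> (\<lambda>(P, Ov). (add_mset (Suc m) P, insert (Suc m) Ov)) ` overpartitions m n"
  (is "?L = ?A \<union> ?B \<union> ?C")
proof
  show "?A \<union> ?B \<union> ?C \<subseteq> ?L"
    by (auto simp: overpartitions_def le_SucI)
next
  show "?L \<subseteq> ?A \<union> ?B \<union> ?C"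
  proof (rule subrelI)
    fix P Ov assume L: "(P, Ov) \<in> ?L"
    show "(P, Ov) \<in> ?A \<union> ?B \<union> ?C"
    proof (cases "Suc m \<in># P")
      case False
      then have "(P, Ov) \<in> ?A" using L by (auto simp: overpartitions_def le_Suc_eq)
      then show ?thesis by blast
    next
      case True
      then obtain P' where P: "P = add_mset (Suc m) P'" by (metis multi_member_split)
      show ?thesis
      proof (cases "Suc m \<in> Ov \<and> Suc m \<notin># P'")
        case True
        then have "(P', Ov - {Suc m}) \<in> overpartitions m n"
          using L by (auto simp: overpartitions_def P le_Suc_eq)
        moreover have "Ov = insert (Suc m) (Ov - {Suc m})" using True by blast
        ultimately have "(P, Ov) \<in> ?C" unfolding P by (auto intro!: image_eqI)
        then show ?thesis by blast
      next
        case False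
        then have "(P', Ov) \<in> overpartitions (Suc m) n"
          using L by (auto simp: overpartitions_def P)
        then have "(P, Ov) \<in> ?B" unfolding P by (auto intro!: image_eqI)
        then show ?thesis by blast
      qed
    qed
  qed
qed

lemma finite_overpartitions: "finite (overpartitions m n)"
proof (rule finite_subset)
  show "overpartitions m n \<subseteq> (\<Union>k\<le>n. multisets_of_size {1..m} k) \<times> Pow {1..m}"
    by (fastforce simp: overpartitions_def multisets_of_size_def Suc_le_eq)
qed auto

lemma overline_gauss_0_left [simp]: "overline_gauss 0 n q t = 1"
  by (simp add: overline_gauss_def overpartitions_0_left)

lemma overline_gauss_0_right [simp]: "overline_gauss m 0 q t = 1"
  by (simp add: overline_gauss_def overpartitions_0_right)

lemma overline_gauss_Suc_Suc:
  "overline_gauss (Suc m) (Suc n) q t = q ^ Suc m * overline_gauss (Suc m) n q t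
    + overline_gauss m (Suc n) q t + t * q ^ Suc m * overline_gauss m n q t"
proof -
  let ?w = "\<lambda>(P, Ov). t ^ card Ov * q ^ sum_mset P"
  let ?f = "\<lambda>(P, Ov). (add_mset (Suc m) P, Ov)"
  let ?g = "\<lambda>(P, Ov). (add_mset (Suc m) P, insert (Suc m) Ov)"
  let ?A = "overpartitions m (Suc n)" and ?B = "overpartitions (Suc m) n"
  let ?C = "overpartitions m n"
  have disjoint: "?A \<inter> ?f ` ?B = {}" "(?A \<union> ?f ` ?B) \<inter> ?g ` ?C = {}"
    by (fastforce simp: overpartitions_def)+
  have "inj_on ?f ?B" by (auto simp: inj_on_def)
  moreover have w_f: "?w (?f x) = q ^ Suc m * ?w x" for x
    by (cases x) (simp add: algebra_simps power_add)
  ultimately have f: "sum ?w (?f ` ?B) = q ^ Suc m * overline_gauss (Suc m) n q t"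
    unfolding overline_gauss_def by (simp only: sum.reindex comp_def w_f sum_distrib_left)
  have "inj_on ?g ?C"
    by (auto simp: inj_on_def dest!: largest_part_notin_overpartitions) (metis insert_ident)+
  moreover have "?w (?g x) = t * q ^ Suc m * ?w x" if "x \<in> ?C" for x
  proof (cases x)
    case (Pair P Ov)
    then have "Suc m \<notin> Ov" "finite Ov"
      using that largest_part_notin_overpartitions by (auto simp: overpartitions_def intro: finite_subset)
    then show ?thesis using Pair by (simp add: algebra_simps power_add)
  qed
  ultimately have g: "sum ?w (?g ` ?C) = t * q ^ Suc m * overline_gauss m n q t"
    unfolding overline_gauss_def sum_distrib_left by (simp add: sum.reindex)
  have "overline_gauss (Suc m) (Suc n) q t = sum ?w ?A + sum ?w (?f ` ?B) + sum ?w (?g ` ?C)"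
    unfolding overline_gauss_def overpartitions_Suc_Suc
    using disjoint by (simp add: finite_overpartitions sum.union_disjoint)
  then show ?thesis by (simp add: overline_gauss_def f g)
qed

text \<open>Since a - k truncates to 0, gauss_binom a k q does not vanish for k > a; the zero extension
  is made explicit.\<close>
definition qbinomial :: "'a::field \<Rightarrow> nat \<Rightarrow> nat \<Rightarrow> 'a" where
  "qbinomial q a k = (if k \<le> a then gauss_binom a k q else 0)"

lemma qpoch_Suc: "qpoch x q (Suc k) = qpoch x q k * (1 - x * q ^ k)"
  by (simp add: qpoch_def)

lemma qpoch_q_nonzero:
  fixes q :: "'a::field"
  assumes "\<forall>i\<in>{1..k}. q ^ i \<noteq> 1"
  shows "qpoch q q k \<noteq> 0"
proof -
  have "q ^ Suc j \<noteq> 1" if "j < k" for j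
    using assms[rule_format, of "Suc j"] that by simp
  then show ?thesis by (auto simp: qpoch_def)
qed

lemma qbinomial_eq_0 [simp]: "a < k \<Longrightarrow> qbinomial q a k = 0"
  by (simp add: qbinomial_def)

lemma qbinomial_0_right [simp]:
  assumes "\<forall>i\<in>{1..a}. q ^ i \<noteq> 1"
  shows "qbinomial q a 0 = 1"
  using qpoch_q_nonzero[OF assms] by (simp add: qbinomial_def gauss_binom_def qpoch_def)

lemma qbinomial_Suc_right:
  fixes q :: "'a::field"
  assumes "\<forall>i\<in>{1..a}. q ^ i \<noteq> 1"
  shows "(1 - q ^ Suc j) * qbinomial q a (Suc j) = (1 - q ^ (a - j)) * qbinomial q a j"
proof (cases "j < a")
  case True
  then obtain e where a: "a = Suc (j + e)" using less_imp_Suc_add by blast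
  have "q ^ Suc j \<noteq> 1" "q ^ Suc e \<noteq> 1"
    using assms[rule_format, of "Suc j"] assms[rule_format, of "Suc e"] a by simp_all
  moreover have "qpoch q q j \<noteq> 0" "qpoch q q e \<noteq> 0"
    using assms a by (auto intro!: qpoch_q_nonzero)
  ultimately show ?thesis
    using a by (simp add: qbinomial_def gauss_binom_def qpoch_Suc Suc_diff_le field_simps)
qed (auto simp: qbinomial_def)

lemma qbinomial_absorption:
  fixes q :: "'a::field"
  assumes "\<forall>i\<in>{1..Suc a}. q ^ i \<noteq> 1"
  shows "(1 - q ^ Suc j) * qbinomial q (Suc a) (Suc j) = (1 - q ^ Suc a) * qbinomial q a j"
proof (cases "j \<le> a")
  case True
  have "q ^ Suc j \<noteq> 1" using assms[rule_format, of "Suc j"] True by simp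
  moreover have "qpoch q q j \<noteq> 0" "qpoch q q (a - j) \<noteq> 0"
    using assms True by (auto intro!: qpoch_q_nonzero)
  ultimately show ?thesis
    using True by (simp add: qbinomial_def gauss_binom_def qpoch_Suc Suc_diff_le field_simps)
qed (auto simp: qbinomial_def)

lemma qbinomial_pascal:
  fixes q :: "'a::field"
  assumes "\<forall>i\<in>{1..Suc a}. q ^ i \<noteq> 1"
  shows "qbinomial q (Suc a) (Suc j) = qbinomial q a j + q ^ Suc j * qbinomial q a (Suc j)"
proof (cases "j \<le> a")
  case True
  let ?c = "1 - q ^ Suc j"
  have c: "?c \<noteq> 0" using assms[rule_format, of "Suc j"] True by simp
  have qa: "q ^ a = q ^ j * q ^ (a - j)" using True by (simp flip: power_add)
  have r: "?c * qbinomial q a (Suc j) = (1 - q ^ (a - j)) * qbinomial q a j"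
    using assms by (intro qbinomial_Suc_right) simp
  have "?c * (qbinomial q a j + q ^ Suc j * qbinomial q a (Suc j))
      = ?c * qbinomial q a j + q ^ Suc j * (?c * qbinomial q a (Suc j))"
    by (simp add: algebra_simps)
  also have "\<dots> = (1 - q ^ Suc a) * qbinomial q a j" unfolding r by (simp add: qa algebra_simps)
  also have "\<dots> = ?c * qbinomial q (Suc a) (Suc j)" by (rule qbinomial_absorption[OF assms, symmetric])
  finally show ?thesis using c by simp
qed simp

lemma qbinomial_pascal':
  fixes q :: "'a::field"
  assumes "\<forall>i\<in>{1..Suc a}. q ^ i \<noteq> 1"
  shows "qbinomial q (Suc a) (Suc j) = q ^ (a - j) * qbinomial q a j + qbinomial q a (Suc j)"
proof (cases "j \<le> a")
  case True
  let ?c = "1 - q ^ Suc j"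
  have c: "?c \<noteq> 0" using assms[rule_format, of "Suc j"] True by simp
  have qa: "q ^ a = q ^ j * q ^ (a - j)" using True by (simp flip: power_add)
  have r: "?c * qbinomial q a (Suc j) = (1 - q ^ (a - j)) * qbinomial q a j"
    using assms by (intro qbinomial_Suc_right) simp
  have "?c * (q ^ (a - j) * qbinomial q a j + qbinomial q a (Suc j))
      = ?c * q ^ (a - j) * qbinomial q a j + ?c * qbinomial q a (Suc j)"
    by (simp add: algebra_simps)
  also have "\<dots> = (1 - q ^ Suc a) * qbinomial q a j" unfolding r by (simp add: qa algebra_simps)
  also have "\<dots> = ?c * qbinomial q (Suc a) (Suc j)" by (rule qbinomial_absorption[OF assms, symmetric])
  finally show ?thesis using c by simp
qed simp

text \<open>The coefficient in the theorem is q^k times this: t^k q^(k(k+1)/2) (-1/t;q)_k.\<close>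
definition overline_coeff :: "'a::comm_ring_1 \<Rightarrow> 'a \<Rightarrow> nat \<Rightarrow> 'a" where
  "overline_coeff q t k = q ^ (k choose 2) * (\<Prod>j<k. t + q ^ j)"

lemma overline_coeff_0 [simp]: "overline_coeff q t 0 = 1"
  by (simp add: overline_coeff_def numeral_2_eq_2)

lemma overline_coeff_Suc: "overline_coeff q t (Suc k) = q ^ k * (q ^ k + t) * overline_coeff q t k"
  by (simp add: overline_coeff_def numeral_2_eq_2 power_add algebra_simps)

definition binomial_product_term :: "'a::field \<Rightarrow> 'a \<Rightarrow> nat \<Rightarrow> nat \<Rightarrow> nat \<Rightarrow> 'a" where
  "binomial_product_term q t x y k = q ^ k * overline_coeff q t k * qbinomial q x k * qbinomial q y k"

definition binomial_product_sum :: "'a::field \<Rightarrow> 'a \<Rightarrow> nat \<Rightarrow> nat \<Rightarrow> nat \<Rightarrow> 'a" where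
  "binomial_product_sum q t N x y = (\<Sum>k\<le>N. binomial_product_term q t x y k)"

lemma binomial_product_term_telescoping:
  fixes q t :: "'a::field"
  assumes a: "\<forall>i\<in>{1..Suc a}. q ^ i \<noteq> 1" and b: "\<forall>i\<in>{1..Suc b}. q ^ i \<noteq> 1"
  shows "binomial_product_term q t (Suc a) (Suc b) (Suc j) - binomial_product_term q t a (Suc b) (Suc j)
      - q ^ Suc a * binomial_product_term q t (Suc a) b (Suc j)
      - t * q ^ Suc a * binomial_product_term q t a b (Suc j)
    = q ^ Suc a * (overline_coeff q t (Suc j) * qbinomial q a j * qbinomial q b j
      - overline_coeff q t (Suc (Suc j)) * qbinomial q a (Suc j) * qbinomial q b (Suc j))"
proof -
  let ?P = "q ^ Suc a" and ?u = "q ^ Suc j" and ?c = "overline_coeff q t (Suc j)"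
  let ?X = "qbinomial q (Suc a) (Suc j)" and ?Y = "qbinomial q (Suc b) (Suc j)"
  let ?E0 = "qbinomial q a j" and ?E1 = "qbinomial q a (Suc j)"
  let ?F0 = "qbinomial q b j" and ?F1 = "qbinomial q b (Suc j)"
  have diff: "?u * (?X - ?E1) = ?P * ?E0"
  proof (cases "j \<le> a")
    case True
    then have "?u * q ^ (a - j) = ?P" by (simp flip: power_add)
    then show ?thesis unfolding qbinomial_pascal'[OF a] by (simp add: mult.assoc[symmetric])
  qed simp
  have "binomial_product_term q t (Suc a) (Suc b) (Suc j) - binomial_product_term q t a (Suc b) (Suc j)
      - ?P * binomial_product_term q t (Suc a) b (Suc j) - t * ?P * binomial_product_term q t a b (Suc j)
    = ?c * ?Y * (?u * (?X - ?E1)) - ?P * ?u * ?c * ?X * ?F1 - t * ?P * ?u * ?c * ?E1 * ?F1"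
    by (simp add: binomial_product_term_def algebra_simps)
  also have "\<dots> = ?c * ?Y * (?P * ?E0) - ?P * ?u * ?c * ?X * ?F1 - t * ?P * ?u * ?c * ?E1 * ?F1"
    unfolding diff ..
  also have "\<dots> = ?P * (?c * ?E0 * ?F0 - ?u * (?u + t) * ?c * ?E1 * ?F1)"
    unfolding qbinomial_pascal[OF a] qbinomial_pascal[OF b] by (simp add: algebra_simps)
  also have "\<dots> = ?P * (?c * ?E0 * ?F0 - overline_coeff q t (Suc (Suc j)) * ?E1 * ?F1)"
    by (simp only: overline_coeff_Suc[of q t "Suc j"] mult.assoc)
  finally show ?thesis .
qed

lemma binomial_product_sum_0_left:
  fixes q t :: "'a::field"
  assumes "\<forall>i\<in>{1..y}. q ^ i \<noteq> 1"
  shows "binomial_product_sum q t N 0 y = 1"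
  using assms by (simp add: binomial_product_sum_def binomial_product_term_def sum.atMost_shift)

lemma binomial_product_sum_0_right:
  fixes q t :: "'a::field"
  assumes "\<forall>i\<in>{1..x}. q ^ i \<noteq> 1"
  shows "binomial_product_sum q t N x 0 = 1"
  using assms by (simp add: binomial_product_sum_def binomial_product_term_def sum.atMost_shift)

lemma binomial_product_sum_Suc_Suc:
  fixes q t :: "'a::field"
  assumes q: "\<forall>i\<in>{1..N}. q ^ i \<noteq> 1" and N: "Suc a + Suc b \<le> N"
  shows "binomial_product_sum q t N (Suc a) (Suc b) = q ^ Suc a * binomial_product_sum q t N (Suc a) b
    + binomial_product_sum q t N a (Suc b) + t * q ^ Suc a * binomial_product_sum q t N a b"
proof -
  let ?P = "q ^ Suc a" and ?T = "binomial_product_term q t"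
  let ?g = "\<lambda>j. overline_coeff q t (Suc j) * qbinomial q a j * qbinomial q b j"
  define D where "D k = ?T (Suc a) (Suc b) k - ?T a (Suc b) k - ?P * ?T (Suc a) b k - t * ?P * ?T a b k"
    for k
  have qa: "\<forall>i\<in>{1..Suc a}. q ^ i \<noteq> 1" and qb: "\<forall>i\<in>{1..Suc b}. q ^ i \<noteq> 1"
    using q N by auto
  have "binomial_product_sum q t N (Suc a) (Suc b) - ?P * binomial_product_sum q t N (Suc a) b
      - binomial_product_sum q t N a (Suc b) - t * ?P * binomial_product_sum q t N a b = (\<Sum>k\<le>N. D k)"
    by (simp add: binomial_product_sum_def D_def sum_subtractf sum_distrib_left)
  also have "\<dots> = D 0 + (\<Sum>j<N. ?P * (?g j - ?g (Suc j)))"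
    unfolding sum.atMost_shift D_def binomial_product_term_telescoping[OF qa qb] ..
  also have "\<dots> = D 0 + ?P * (?g 0 - ?g N)"
    by (simp only: sum_distrib_left[symmetric] sum_lessThan_telescope'[of ?g N])
  also have "\<dots> = 0"
    using qa qb N by (simp add: D_def binomial_product_term_def overline_coeff_Suc algebra_simps)
  finally show ?thesis by (simp add: algebra_simps)
qed

lemma overline_gauss_eq_binomial_product_sum:
  fixes q t :: "'a::field"
  assumes q: "\<forall>i\<in>{1..N}. q ^ i \<noteq> 1"
  shows "m + n \<le> N \<Longrightarrow> overline_gauss m n q t = binomial_product_sum q t N m n"
proof (induction m arbitrary: n)
  case 0
  then show ?case using q by (simp add: binomial_product_sum_0_left)
next
  case (Suc m)
  then show ?case
  proof (induction n)
    case 0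
    then show ?case using q by (simp add: binomial_product_sum_0_right)
  next
    case (Suc n)
    then show ?case
      using q by (simp add: overline_gauss_Suc_Suc binomial_product_sum_Suc_Suc)
  qed
qed

lemma triangular_eq_add_choose_two: "k * (k + 1) div 2 = k + (k choose 2)"
proof -
  have "Suc k choose 2 = k + (k choose 2)" by (simp add: numeral_2_eq_2)
  then show ?thesis by (simp add: choose_two mult.commute)
qed

theorem proposition2p5:
  fixes m n :: nat and q t :: "'a::field"
  assumes "\<forall>j\<in>{1..m+n}. q ^ j \<noteq> 1"
  shows "overline_gauss m n q t =
    (\<Sum>k=0..min m n. q ^ (k * (k + 1) div 2) * (\<Prod>j<k. t + q ^ j)
        * gauss_binom m k q * gauss_binom n k q)"
proof -
  have "overline_gauss m n q t = (\<Sum>k\<le>m + n. binomial_product_term q t m n k)"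
    using overline_gauss_eq_binomial_product_sum[OF assms] by (simp add: binomial_product_sum_def)
  also have "\<dots> = (\<Sum>k=0..min m n. binomial_product_term q t m n k)"
    by (rule sum.mono_neutral_right) (auto simp: binomial_product_term_def)
  also have "\<dots> = (\<Sum>k=0..min m n. q ^ (k * (k + 1) div 2) * (\<Prod>j<k. t + q ^ j)
        * gauss_binom m k q * gauss_binom n k q)"
    unfolding triangular_eq_add_choose_two power_add
    by (intro sum.cong) (auto simp: binomial_product_term_def overline_coeff_def qbinomial_def)
  finally show ?thesis .
qed

end
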